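(* For every integer $n\geq 1$, the polynomial $L_n(q)=\sum_{s=0}^{n} L_{n,s}\,q^s$ is unimodal; that is, there is an index $m$ with $L_{n,0}\leq L_{n,1}\leq\cdots\leq L_{n,m}\geq L_{n,m+1}\geq\cdots\geq L_{n,n}$.
   Context: A linear chord diagram with $n$ chords is a partition of $[2n]=\{1,2,\dots,2n\}$ into $n$ blocks of size two, called chords (equivalently, a perfect matching of $[2n]$). For a chord $\{a,b\}$ with $a<b$, its length is $b-a$. A short chord is a chord of length one, i.e. a chord of the form $\{i,i+1\}$. For $0\le s\le n$, $L_{n,s}$ denotes the number of linear chord diagrams with $n$ chords having exactly $s$ short chords. *)

theory Defs
  imports Main
begin

definition chord_diagrams :: "nat \<Rightarrow> nat set set set" where
  "chord_diagrams n = {P. (\<Union>P) = {1..2*n} \<and> (\<forall>c\<in>P. card c = 2)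
      \<and> (\<forall>c\<in>P. \<forall>d\<in>P. c \<noteq> d \<longrightarrow> c \<inter> d = {})}"

definition short_chords :: "nat set set \<Rightarrow> nat set set" where
  "short_chords P = {c\<in>P. \<exists>i. c = {i, Suc i}}"

definition L :: "nat \<Rightarrow> nat \<Rightarrow> nat" where
  "L n s = card {P \<in> chord_diagrams n. card (short_chords P) = s}"

end

theory Submission
  imports Defs
begin

text \<open>Removing a chord \<open>{p, q}\<close> from a diagram with \<open>m + 1\<close> chords and relabelling the
  other points increasingly is, for each fixed \<open>p < q\<close>, a bijection onto the diagrams with \<open>m\<close>
  chords. Counting diagrams with a marked short chord this way gives
  \<open>s L(m+1, s) = s L(m, s) + (2m + 2 - s) L(m, s - 1)\<close> for \<open>s \<ge> 1\<close>: inserting a short chord into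
  one of the \<open>2m + 1\<close> gaps breaks the short chord spanning that gap, if there is one. Sorting the
  diagrams without short chords by the partner of the last point gives
  \<open>L(m+1, 0) = 2m L(m, 0) + L(m, 1)\<close>. Hence \<open>L(n, 1) = L(n, 0) + L(n-1, 0) \<ge> L(n, 0)\<close>, and the first
  recurrence carries \<open>L(n, s+1) \<le> L(n, s)\<close> for all \<open>s \<ge> 1\<close> from \<open>n\<close> to \<open>n + 1\<close>, starting at \<open>n = 2\<close>;
  so the mode is \<open>s = 1\<close>.\<close>

section \<open>Inserting and removing a chord\<close>

text \<open>For \<open>p < q\<close>, \<open>skip_pair p q\<close> enumerates \<open>\<nat> - {p, q}\<close> increasingly; it relabels the points
  of a diagram into which the chord \<open>{p, q}\<close> is inserted, and \<open>unskip_pair p q\<close> undoes it.\<close>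

definition skip_pair :: "nat \<Rightarrow> nat \<Rightarrow> nat \<Rightarrow> nat" where
  "skip_pair p q x = (if x < p then x else if Suc x < q then Suc x else Suc (Suc x))"

definition unskip_pair :: "nat \<Rightarrow> nat \<Rightarrow> nat \<Rightarrow> nat" where
  "unskip_pair p q y = (if y < p then y else if y < q then y - 1 else y - 2)"

definition insert_chord :: "nat \<Rightarrow> nat \<Rightarrow> nat set set \<Rightarrow> nat set set" where
  "insert_chord p q D = insert {p, q} ((`) (skip_pair p q) ` D)"

definition remove_chord :: "nat \<Rightarrow> nat \<Rightarrow> nat set set \<Rightarrow> nat set set" where
  "remove_chord p q D = (`) (unskip_pair p q) ` (D - {{p, q}})"

lemma strict_mono_skip_pair: "p < q \<Longrightarrow> strict_mono (skip_pair p q)"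
  by (auto simp: strict_mono_def skip_pair_def)

lemma inj_skip_pair: "p < q \<Longrightarrow> inj (skip_pair p q)"
  by (simp add: strict_mono_imp_inj_on strict_mono_skip_pair)

lemma skip_pair_notin: "p < q \<Longrightarrow> skip_pair p q x \<notin> {p, q}"
  by (auto simp: skip_pair_def)

lemma unskip_skip_pair: "p < q \<Longrightarrow> unskip_pair p q (skip_pair p q x) = x"
  by (auto simp: skip_pair_def unskip_pair_def)

lemma skip_unskip_pair: "p < q \<Longrightarrow> y \<notin> {p, q} \<Longrightarrow> skip_pair p q (unskip_pair p q y) = y"
  by (auto simp: skip_pair_def unskip_pair_def)

lemma skip_pair_Suc_iff:
  "p < q \<Longrightarrow> skip_pair p q (Suc x) = Suc (skip_pair p q x) \<longleftrightarrow> Suc x \<noteq> p \<and> Suc (Suc x) \<noteq> q"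
  by (auto simp: skip_pair_def)

lemma skip_pair_image_atLeastAtMost:
  assumes "1 \<le> p" "p < q" "q \<le> 2*m + 2"
  shows "skip_pair p q ` {1..2*m} = {1..2*m + 2} - {p, q}"
proof
  show "skip_pair p q ` {1..2*m} \<subseteq> {1..2*m + 2} - {p, q}"
    using assms skip_pair_notin by (auto simp: skip_pair_def)
  show "{1..2*m + 2} - {p, q} \<subseteq> skip_pair p q ` {1..2*m}"
  proof
    fix y assume y: "y \<in> {1..2*m + 2} - {p, q}"
    then have "unskip_pair p q y \<in> {1..2*m}"
      using assms by (auto simp: unskip_pair_def)
    with y show "y \<in> skip_pair p q ` {1..2*m}"
      using skip_unskip_pair[OF assms(2)] by (metis Diff_iff image_eqI)
  qed
qed

lemma chord_diagrams_subset: "D \<in> chord_diagrams n \<Longrightarrow> c \<in> D \<Longrightarrow> c \<subseteq> {1..2*n}"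
  unfolding chord_diagrams_def by blast

lemma chord_diagrams_disjoint:
  "D \<in> chord_diagrams n \<Longrightarrow> c \<in> D \<Longrightarrow> d \<in> D \<Longrightarrow> c \<noteq> d \<Longrightarrow> c \<inter> d = {}"
  unfolding chord_diagrams_def by blast

lemma finite_chord_diagrams: "finite (chord_diagrams n)"
proof (rule finite_subset)
  show "chord_diagrams n \<subseteq> Pow (Pow {1..2*n})"
    using chord_diagrams_subset by blast
qed simp

lemma finite_chord_diagram: "D \<in> chord_diagrams n \<Longrightarrow> finite D"
  by (rule finite_subset[of _ "Pow {1..2*n}"]) (use chord_diagrams_subset in auto)

lemma chord_diagrams_0: "D \<in> chord_diagrams 0 \<Longrightarrow> D = {}"
  unfolding chord_diagrams_def by fastforce

lemma insert_chord_in_chord_diagrams_iff: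
  assumes "1 \<le> p" "p < q" "q \<le> 2*m + 2"
  shows "insert_chord p q D \<in> chord_diagrams (Suc m) \<longleftrightarrow> D \<in> chord_diagrams m"
proof -
  let ?e = "skip_pair p q"
  have inj: "inj ?e"
    using inj_skip_pair[OF assms(2)] .
  have avoid: "?e ` c \<inter> {p, q} = {}" for c
    using skip_pair_notin[OF assms(2)] by (metis disjoint_iff imageE)
  have cancel: "{p, q} \<union> A = {p, q} \<union> B \<longleftrightarrow> A = B"
    if "A \<inter> {p, q} = {}" "B \<inter> {p, q} = {}" for A B :: "nat set"
    using that by blast
  have range: "{1..2 * Suc m} = {p, q} \<union> ?e ` {1..2*m}"
    by (subst skip_pair_image_atLeastAtMost[OF assms]) (use assms in auto)
  have "\<Union>(insert_chord p q D) = {p, q} \<union> ?e ` \<Union>D"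
    by (auto simp: insert_chord_def)
  then have "\<Union>(insert_chord p q D) = {1..2 * Suc m} \<longleftrightarrow> ?e ` \<Union>D = ?e ` {1..2*m}"
    unfolding range by (simp only: cancel[OF avoid avoid])
  also have "\<dots> \<longleftrightarrow> \<Union>D = {1..2*m}"
    using inj by (simp add: inj_image_eq_iff)
  finally have union: "\<Union>(insert_chord p q D) = {1..2 * Suc m} \<longleftrightarrow> \<Union>D = {1..2*m}" .
  have card: "(\<forall>c\<in>insert_chord p q D. card c = 2) \<longleftrightarrow> (\<forall>c\<in>D. card c = 2)"
    using assms inj by (simp add: insert_chord_def card_image inj_on_subset)
  have image_disjoint: "?e ` c \<inter> ?e ` d = {} \<longleftrightarrow> c \<inter> d = {}" for c d
    by (simp add: image_Int[OF inj, symmetric])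
  have disjoint: "(\<forall>c\<in>insert_chord p q D. \<forall>d\<in>insert_chord p q D. c \<noteq> d \<longrightarrow> c \<inter> d = {})
      \<longleftrightarrow> (\<forall>c\<in>D. \<forall>d\<in>D. c \<noteq> d \<longrightarrow> c \<inter> d = {})"
    using avoid by (simp add: insert_chord_def image_disjoint inj_image_eq_iff[OF inj] Int_commute)
  show ?thesis
    unfolding chord_diagrams_def mem_Collect_eq by (simp only: union card disjoint)
qed

lemma remove_insert_chord: "p < q \<Longrightarrow> remove_chord p q (insert_chord p q D) = D"
proof -
  assume pq: "p < q"
  have "{p, q} \<notin> (`) (skip_pair p q) ` D"
    using skip_pair_notin[OF pq] by (metis imageE insertI1)
  then have "insert_chord p q D - {{p, q}} = (`) (skip_pair p q) ` D"
    by (auto simp: insert_chord_def)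
  then show ?thesis
    by (simp add: remove_chord_def image_image unskip_skip_pair[OF pq])
qed

lemma insert_remove_chord:
  assumes "D \<in> chord_diagrams n" "{p, q} \<in> D" "p < q"
  shows "insert_chord p q (remove_chord p q D) = D"
proof -
  have "skip_pair p q ` unskip_pair p q ` c = c" if "c \<in> D - {{p, q}}" for c
  proof -
    have "c \<inter> {p, q} = {}"
      using chord_diagrams_disjoint[OF assms(1)] that assms(2) by blast
    then show ?thesis
      using skip_unskip_pair[OF assms(3)] by (force simp: image_image)
  qed
  then have "(`) (skip_pair p q) ` remove_chord p q D = D - {{p, q}}"
    by (simp add: remove_chord_def image_image)
  then show ?thesis
    using assms(2) by (auto simp: insert_chord_def)
qed

lemma bij_betw_insert_chord:
  assumes "1 \<le> p" "p < q" "q \<le> 2*m + 2"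
  shows "bij_betw (insert_chord p q) (chord_diagrams m) {D \<in> chord_diagrams (Suc m). {p, q} \<in> D}"
proof (rule bij_betw_byWitness[where f' = "remove_chord p q"])
  show "\<forall>D\<in>chord_diagrams m. remove_chord p q (insert_chord p q D) = D"
    using remove_insert_chord[OF assms(2)] by blast
  show "\<forall>D\<in>{D \<in> chord_diagrams (Suc m). {p, q} \<in> D}. insert_chord p q (remove_chord p q D) = D"
    using insert_remove_chord assms(2) by blast
  show "insert_chord p q ` chord_diagrams m \<subseteq> {D \<in> chord_diagrams (Suc m). {p, q} \<in> D}"
    using insert_chord_in_chord_diagrams_iff[OF assms] by (auto simp: insert_chord_def)
  show "remove_chord p q ` {D \<in> chord_diagrams (Suc m). {p, q} \<in> D} \<subseteq> chord_diagrams m"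
    using insert_remove_chord insert_chord_in_chord_diagrams_iff[OF assms] assms(2) by fastforce
qed

section \<open>Short chords after an insertion\<close>

lemma image_skip_pair_eq_doubleton_Suc:
  assumes pq: "p < q" and c: "skip_pair p q ` c = {i, Suc i}"
  obtains x where "c = {x, Suc x}" "Suc x \<noteq> p" "Suc (Suc x) \<noteq> q"
proof -
  let ?e = "skip_pair p q"
  obtain a b where ab: "a \<in> c" "b \<in> c" "?e a = i" "?e b = Suc i"
    using c by (metis imageE insertI1 insertI2 singletonI)
  have mono: "strict_mono ?e"
    using strict_mono_skip_pair[OF pq] .
  have "a < b"
    using ab mono by (metis lessI strict_mono_less)
  moreover have "\<not> Suc a < b"
    using ab mono strict_mono_less[OF mono, of a "Suc a"] strict_mono_less[OF mono, of "Suc a" b]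
    by auto
  ultimately have b: "b = Suc a"
    by simp
  then have "?e (Suc a) = Suc (?e a)"
    using ab by simp
  then have "Suc a \<noteq> p" "Suc (Suc a) \<noteq> q"
    using skip_pair_Suc_iff[OF pq] by auto
  moreover have "c = {a, Suc a}"
  proof
    show "{a, Suc a} \<subseteq> c"
      using ab b by simp
    show "c \<subseteq> {a, Suc a}"
    proof
      fix x assume "x \<in> c"
      then have "?e x \<in> {?e a, ?e (Suc a)}"
        using c ab b by (metis image_eqI)
      then show "x \<in> {a, Suc a}"
        using inj_skip_pair[OF pq] by (auto dest: injD)
    qed
  qed
  ultimately show thesis
    using that by blast
qed

lemma short_chords_insert:
  "short_chords (insert c D) = (if \<exists>i. c = {i, Suc i} then insert c (short_chords D) else short_chords D)"
  by (auto simp: short_chords_def)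

lemma image_skip_pair_is_short_iff:
  assumes pq: "p < q"
  shows "(\<exists>i. skip_pair p q ` c = {i, Suc i}) \<longleftrightarrow> (\<exists>x. c = {x, Suc x} \<and> Suc x \<noteq> p \<and> Suc (Suc x) \<noteq> q)"
proof
  assume "\<exists>i. skip_pair p q ` c = {i, Suc i}"
  then show "\<exists>x. c = {x, Suc x} \<and> Suc x \<noteq> p \<and> Suc (Suc x) \<noteq> q"
    by (elim exE image_skip_pair_eq_doubleton_Suc[OF pq]) blast
next
  assume "\<exists>x. c = {x, Suc x} \<and> Suc x \<noteq> p \<and> Suc (Suc x) \<noteq> q"
  then obtain x where "c = {x, Suc x}" "skip_pair p q (Suc x) = Suc (skip_pair p q x)"
    using skip_pair_Suc_iff[OF pq] by blast
  then show "\<exists>i. skip_pair p q ` c = {i, Suc i}"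
    by (intro exI[of _ "skip_pair p q x"]) simp
qed

text \<open>The new points \<open>p\<close> and \<open>q\<close> fall into the short chords \<open>{p - 1, p}\<close> and \<open>{q - 2, q - 1}\<close>
  of \<open>D\<close>, which therefore stop being short.\<close>

lemma short_chords_insert_chord:
  assumes pq: "p < q"
  shows "short_chords (insert_chord p q D) = (if q = Suc p then {{p, q}} else {})
           \<union> (`) (skip_pair p q) ` (short_chords D - {{p - 1, p}, {q - 2, q - 1}})"
proof -
  let ?e = "skip_pair p q"
  have broken_iff: "{x, Suc x} \<in> {{p - 1, p}, {q - 2, q - 1}} \<longleftrightarrow> Suc x = p \<or> Suc (Suc x) = q" for x
    by (auto simp: doubleton_eq_iff)
  have short_pq: "(\<exists>i. {p, q} = {i, Suc i}) \<longleftrightarrow> q = Suc p"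
    using pq by (auto simp: doubleton_eq_iff)
  have "short_chords (insert_chord p q D)
      = (if q = Suc p then {{p, q}} else {}) \<union> short_chords ((`) ?e ` D)"
    unfolding insert_chord_def short_chords_insert short_pq by simp
  also have "short_chords ((`) ?e ` D) = (`) ?e ` {c \<in> D. \<exists>i. ?e ` c = {i, Suc i}}"
    unfolding short_chords_def by blast
  also have "{c \<in> D. \<exists>i. ?e ` c = {i, Suc i}} = {c \<in> D. \<exists>x. c = {x, Suc x} \<and> Suc x \<noteq> p \<and> Suc (Suc x) \<noteq> q}"
    by (simp only: image_skip_pair_is_short_iff[OF pq])
  also have "\<dots> = short_chords D - {{p - 1, p}, {q - 2, q - 1}}"
  proof (intro equalityI subsetI)
    fix c assume "c \<in> {c \<in> D. \<exists>x. c = {x, Suc x} \<and> Suc x \<noteq> p \<and> Suc (Suc x) \<noteq> q}"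
    then obtain x where "c \<in> D" "c = {x, Suc x}" "Suc x \<noteq> p" "Suc (Suc x) \<noteq> q"
      by blast
    then show "c \<in> short_chords D - {{p - 1, p}, {q - 2, q - 1}}"
      unfolding short_chords_def using broken_iff[of x] by blast
  next
    fix c assume "c \<in> short_chords D - {{p - 1, p}, {q - 2, q - 1}}"
    then obtain x where "c \<in> D" "c = {x, Suc x}" "c \<notin> {{p - 1, p}, {q - 2, q - 1}}"
      unfolding short_chords_def by blast
    then show "c \<in> {c \<in> D. \<exists>x. c = {x, Suc x} \<and> Suc x \<noteq> p \<and> Suc (Suc x) \<noteq> q}"
      using broken_iff[of x] by blast
  qed
  finally show ?thesis .
qed

lemma card_short_chords_insert_chord:
  assumes "finite D" "p < q"
  shows "card (short_chords (insert_chord p q D))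
    = (if q = Suc p then 1 else 0) + card (short_chords D - {{p - 1, p}, {q - 2, q - 1}})"
proof -
  let ?S = "short_chords D - {{p - 1, p}, {q - 2, q - 1}}"
  let ?T = "(`) (skip_pair p q) ` ?S"
  have "finite ?S"
    using assms(1) unfolding short_chords_def by simp
  moreover have "card ?T = card ?S"
    using inj_skip_pair[OF assms(2)] by (intro card_image) (simp add: inj_on_def inj_image_eq_iff)
  moreover have "{p, q} \<notin> ?T"
    using skip_pair_notin[OF assms(2)] by (metis imageE insertI1)
  ultimately show ?thesis
    unfolding short_chords_insert_chord[OF assms(2)] by (auto simp: card_insert_disjoint)
qed

lemma card_short_chords: "card (short_chords D) = card {i. {i, Suc i} \<in> D}"
proof -
  have "short_chords D = (\<lambda>i. {i, Suc i}) ` {i. {i, Suc i} \<in> D}"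
    unfolding short_chords_def by auto
  moreover have "inj (\<lambda>i::nat. {i, Suc i})"
    by (rule injI) (auto simp: doubleton_eq_iff)
  ultimately show ?thesis
    by (simp add: card_image inj_on_subset)
qed

lemma short_chord_bounds: "D \<in> chord_diagrams n \<Longrightarrow> {i, Suc i} \<in> D \<Longrightarrow> 1 \<le> i \<and> Suc i \<le> 2*n"
  using chord_diagrams_subset by fastforce

lemma card_short_chord_right_ends:
  assumes "D \<in> chord_diagrams m" "2*m \<le> N"
  shows "card {p \<in> {1..N}. {p - 1, p} \<in> D} = card (short_chords D)"
proof -
  have "{p \<in> {1..N}. {p - 1, p} \<in> D} = Suc ` {i. {i, Suc i} \<in> D}"
  proof (intro equalityI subsetI)
    fix p assume "p \<in> {p \<in> {1..N}. {p - 1, p} \<in> D}"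
    then show "p \<in> Suc ` {i. {i, Suc i} \<in> D}"
      by (intro image_eqI[of p Suc "p - 1"]) auto
  next
    fix p assume "p \<in> Suc ` {i. {i, Suc i} \<in> D}"
    then show "p \<in> {p \<in> {1..N}. {p - 1, p} \<in> D}"
      using short_chord_bounds[OF assms(1)] assms(2) by fastforce
  qed
  then show ?thesis
    by (simp add: card_image card_short_chords)
qed

lemma card_filter_if_mem:
  assumes "finite I" "G \<subseteq> I"
  shows "card {i \<in> I. if i \<in> G then P else Q} = (if P then card G else 0) + (if Q then card I - card G else 0)"
proof -
  have "{i \<in> I. if i \<in> G then P else Q} = (if P then G else {}) \<union> (if Q then I - G else {})"
    using assms(2) by auto
  then show ?thesis
    using assms by (simp add: card_Un_disjoint card_Diff_subset finite_subset)
qed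

lemma right_end_short_chord_iff: "1 \<le> p \<Longrightarrow> {p - 1, p} \<in> short_chords D \<longleftrightarrow> {p - 1, p} \<in> D"
  unfolding short_chords_def by (auto intro!: exI[of _ "p - 1"])

lemma card_short_chord_insertions:
  assumes D: "D \<in> chord_diagrams m"
  defines "t \<equiv> card (short_chords D)"
  shows "card {p \<in> {1..2*m + 1}. card (short_chords (insert_chord p (Suc p) D)) = s}
    = (if t = s then t else 0) + (if Suc t = s then 2*m + 1 - t else 0)"
proof -
  let ?I = "{1..2*m + 1}"
  let ?G = "{p \<in> ?I. {p - 1, p} \<in> D}"
  have fin: "finite (short_chords D)"
    using finite_chord_diagram[OF D] unfolding short_chords_def by simp
  have "card (short_chords (insert_chord p (Suc p) D)) = (if p \<in> ?G then t else Suc t)"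
    if "p \<in> ?I" for p
  proof -
    have "card (short_chords (insert_chord p (Suc p) D)) = Suc (card (short_chords D - {{p - 1, p}}))"
      using card_short_chords_insert_chord[OF finite_chord_diagram[OF D], of p "Suc p"] by simp
    also have "\<dots> = (if p \<in> ?G then t else Suc t)"
    proof (cases "{p - 1, p} \<in> D")
      case True
      then have "{p - 1, p} \<in> short_chords D"
        using that right_end_short_chord_iff[of p D] by simp
      then show ?thesis
        using True that card_Suc_Diff1[OF fin] unfolding t_def by simp
    qed (use that right_end_short_chord_iff[of p D] in \<open>simp add: t_def\<close>)
    finally show ?thesis .
  qed
  then have "card {p \<in> ?I. card (short_chords (insert_chord p (Suc p) D)) = s}
      = card {p \<in> ?I. if p \<in> ?G then t = s else Suc t = s}"
    by (intro arg_cong[where f = card]) auto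
  also have "\<dots> = (if t = s then card ?G else 0) + (if Suc t = s then card ?I - card ?G else 0)"
    by (rule card_filter_if_mem) auto
  also have "\<dots> = (if t = s then t else 0) + (if Suc t = s then 2*m + 1 - t else 0)"
    using card_short_chord_right_ends[OF D] unfolding t_def by simp
  finally show ?thesis .
qed

lemma card_last_chord_insertions_without_short_chords:
  assumes D: "D \<in> chord_diagrams m"
  defines "t \<equiv> card (short_chords D)"
  shows "card {p \<in> {1..2*m}. card (short_chords (insert_chord p (2*m + 2) D)) = 0}
    = (if t = 0 then 2*m else 0) + (if t = 1 then 1 else 0)"
proof -
  let ?I = "{1..2*m}"
  let ?G = "{p \<in> ?I. {p - 1, p} \<in> D}"
  have fin: "finite (short_chords D)"
    using finite_chord_diagram[OF D] unfolding short_chords_def by simp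
  have "{2*m, Suc (2*m)} \<notin> D"
    using short_chord_bounds[OF D] by fastforce
  then have no_last: "short_chords D - {{p - 1, p}, {2*m, Suc (2*m)}} = short_chords D - {{p - 1, p}}" for p
    unfolding short_chords_def by blast
  have "card (short_chords (insert_chord p (2*m + 2) D)) = 0 \<longleftrightarrow> (if p \<in> ?G then t = 1 else t = 0)"
    if "p \<in> ?I" for p
  proof -
    have "card (short_chords (insert_chord p (2*m + 2) D)) = card (short_chords D - {{p - 1, p}})"
      using card_short_chords_insert_chord[OF finite_chord_diagram[OF D], of p "2*m + 2"] that no_last
      by simp
    also have "\<dots> = 0 \<longleftrightarrow> (if p \<in> ?G then t = 1 else t = 0)"
    proof (cases "{p - 1, p} \<in> D")
      case True
      then have "{p - 1, p} \<in> short_chords D"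
        using that right_end_short_chord_iff[of p D] by simp
      then have "Suc (card (short_chords D - {{p - 1, p}})) = t"
        using card_Suc_Diff1[OF fin] unfolding t_def by blast
      then show ?thesis
        using True that by auto
    qed (use that right_end_short_chord_iff[of p D] in \<open>simp add: t_def\<close>)
    finally show ?thesis .
  qed
  then have "card {p \<in> ?I. card (short_chords (insert_chord p (2*m + 2) D)) = 0}
      = card {p \<in> ?I. if p \<in> ?G then t = 1 else t = 0}"
    by (intro arg_cong[where f = card]) blast
  also have "\<dots> = (if t = 1 then card ?G else 0) + (if t = 0 then card ?I - card ?G else 0)"
    by (rule card_filter_if_mem) auto
  also have "\<dots> = (if t = 0 then 2*m else 0) + (if t = 1 then 1 else 0)"
    using card_short_chord_right_ends[OF D] unfolding t_def by simp
  finally show ?thesis .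
qed

section \<open>Recurrences for \<open>L\<close>\<close>

lemma sum_card_filter_swap:
  assumes "finite A" "finite B"
  shows "(\<Sum>a\<in>A. card {b \<in> B. R a b}) = (\<Sum>b\<in>B. card {a \<in> A. R a b})"
  using sum.swap_restrict[OF assms, of "\<lambda>_ _. 1 :: nat" R] by simp

lemma sum_if_eq_mult_card:
  "finite A \<Longrightarrow> (\<Sum>x\<in>A. if P x then c else 0) = c * card {x \<in> A. P x}"
  by (simp add: sum.inter_filter[symmetric] mult.commute)

text \<open>Both sides count the pairs \<open>(D, j)\<close> with \<open>j \<in> J\<close> and \<open>{j, g j} \<in> D\<close>; the right-hand
  side removes the chord \<open>{j, g j}\<close> from \<open>D\<close>.\<close>

lemma sum_card_insert_chord:
  assumes "finite J" and J: "\<And>j. j \<in> J \<Longrightarrow> 1 \<le> j \<and> j < g j \<and> g j \<le> 2*m + 2"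
  shows "(\<Sum>D \<in> {D \<in> chord_diagrams (Suc m). P D}. card {j \<in> J. {j, g j} \<in> D})
       = (\<Sum>D \<in> chord_diagrams m. card {j \<in> J. P (insert_chord j (g j) D)})"
proof -
  have card_eq: "card {D \<in> {D \<in> chord_diagrams (Suc m). P D}. {j, g j} \<in> D}
      = card {D \<in> chord_diagrams m. P (insert_chord j (g j) D)}" if "j \<in> J" for j
  proof -
    have "bij_betw (insert_chord j (g j)) {D \<in> chord_diagrams m. P (insert_chord j (g j) D)}
        {D \<in> {D \<in> chord_diagrams (Suc m). {j, g j} \<in> D}. P D}"
      using J[OF that] by (intro bij_betw_Collect bij_betw_insert_chord) auto
    moreover have "{D \<in> {D \<in> chord_diagrams (Suc m). {j, g j} \<in> D}. P D}
        = {D \<in> {D \<in> chord_diagrams (Suc m). P D}. {j, g j} \<in> D}"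
      by blast
    ultimately show ?thesis
      by (simp add: bij_betw_same_card)
  qed
  have fin: "finite {D \<in> chord_diagrams (Suc m). P D}"
    using finite_chord_diagrams by simp
  have "(\<Sum>D \<in> {D \<in> chord_diagrams (Suc m). P D}. card {j \<in> J. {j, g j} \<in> D})
      = (\<Sum>j\<in>J. card {D \<in> {D \<in> chord_diagrams (Suc m). P D}. {j, g j} \<in> D})"
    by (rule sum_card_filter_swap[OF fin assms(1)])
  also have "\<dots> = (\<Sum>j\<in>J. card {D \<in> chord_diagrams m. P (insert_chord j (g j) D)})"
    using card_eq by (rule sum.cong[OF refl])
  also have "\<dots> = (\<Sum>D \<in> chord_diagrams m. card {j \<in> J. P (insert_chord j (g j) D)})"
    by (rule sum_card_filter_swap[OF assms(1) finite_chord_diagrams])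
  finally show ?thesis .
qed

lemma chord_diagrams_ex1_partner:
  assumes D: "D \<in> chord_diagrams n" and x: "x \<in> {1..2*n}"
  shows "\<exists>!y. {y, x} \<in> D"
proof -
  have card2: "card c = 2" if "c \<in> D" for c
    using D that unfolding chord_diagrams_def by blast
  obtain c where c: "c \<in> D" "x \<in> c"
    using D x unfolding chord_diagrams_def by blast
  then obtain y where "c = {y, x}"
    using card2[OF c(1)] by (auto simp: card_2_iff)
  moreover have "y' = y" if "{y', x} \<in> D" "{y, x} \<in> D" for y y'
  proof -
    have "{y', x} = {y, x}"
      using chord_diagrams_disjoint[OF D that] by blast
    moreover have "y \<noteq> x"
      using card2[OF that(2)] by (cases "y = x") simp_all
    ultimately show ?thesis
      by (auto simp: doubleton_eq_iff)
  qed
  ultimately show ?thesis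
    using c(1) by blast
qed

lemma card_partners_of_last_point:
  assumes D: "D \<in> chord_diagrams (Suc m)" and "card (short_chords D) = 0"
  shows "card {j \<in> {1..2*m}. {j, 2*m + 2} \<in> D} = 1"
proof -
  let ?Q = "2*m + 2"
  have "finite (short_chords D)"
    using finite_chord_diagram[OF D] unfolding short_chords_def by simp
  then have no_short: "short_chords D = {}"
    using assms(2) by simp
  have "\<exists>!y. {y, ?Q} \<in> D"
    by (rule chord_diagrams_ex1_partner[OF D]) simp
  then obtain y where y: "{y, ?Q} \<in> D" and unique: "\<And>y'. {y', ?Q} \<in> D \<Longrightarrow> y' = y"
    by blast
  have "y \<in> {1..2*m + 2}"
    using chord_diagrams_subset[OF D y] by simp
  moreover have "card {y, ?Q} = 2"
    using y D unfolding chord_diagrams_def by blast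
  then have "y \<noteq> ?Q"
    by (cases "y = ?Q") simp_all
  moreover have "y \<noteq> 2*m + 1"
  proof
    assume "y = 2*m + 1"
    then have "{y, Suc y} \<in> D"
      using y by simp
    then have "{y, Suc y} \<in> short_chords D"
      unfolding short_chords_def by blast
    then show False
      using no_short by simp
  qed
  ultimately have "y \<in> {1..2*m}"
    by simp
  then have "{j \<in> {1..2*m}. {j, ?Q} \<in> D} = {y}"
    using y unique by blast
  then show ?thesis
    by simp
qed

lemma L_Suc_0: "L (Suc m) 0 = 2*m * L m 0 + L m 1"
proof -
  let ?J = "{1..2*m}" and ?Q = "2*m + 2"
  let ?Z = "{D \<in> chord_diagrams (Suc m). card (short_chords D) = 0}"
  have "(\<Sum>D\<in>?Z. card {j \<in> ?J. {j, ?Q} \<in> D}) = (\<Sum>D\<in>?Z. 1)"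
    using card_partners_of_last_point by (intro sum.cong) auto
  then have "L (Suc m) 0 = (\<Sum>D\<in>?Z. card {j \<in> ?J. {j, ?Q} \<in> D})"
    by (simp add: L_def)
  also have "\<dots> = (\<Sum>D\<in>chord_diagrams m. card {j \<in> ?J. card (short_chords (insert_chord j ?Q D)) = 0})"
    by (rule sum_card_insert_chord) auto
  also have "\<dots> = (\<Sum>D\<in>chord_diagrams m. (if card (short_chords D) = 0 then 2*m else 0)
                                          + (if card (short_chords D) = 1 then 1 else 0))"
    by (rule sum.cong[OF refl]) (rule card_last_chord_insertions_without_short_chords)
  also have "\<dots> = 2*m * L m 0 + L m 1"
    by (simp add: sum.distrib sum_if_eq_mult_card finite_chord_diagrams L_def)
  finally show ?thesis .
qed

lemma L_Suc:
  assumes "1 \<le> s"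
  shows "s * L (Suc m) s = s * L m s + (2 * Suc m - s) * L m (s - 1)"
proof -
  let ?J = "{1..2*m + 1}"
  let ?A = "{D \<in> chord_diagrams (Suc m). card (short_chords D) = s}"
  have left_ends: "card {j \<in> ?J. {j, Suc j} \<in> D} = card (short_chords D)"
    if "D \<in> chord_diagrams (Suc m)" for D
  proof -
    have "{j \<in> ?J. {j, Suc j} \<in> D} = {j. {j, Suc j} \<in> D}"
      using short_chord_bounds[OF that] by fastforce
    then show ?thesis
      by (simp add: card_short_chords)
  qed
  have "(\<Sum>D\<in>?A. card {j \<in> ?J. {j, Suc j} \<in> D}) = (\<Sum>D\<in>?A. s)"
    using left_ends by (intro sum.cong) auto
  then have "s * L (Suc m) s = (\<Sum>D\<in>?A. card {j \<in> ?J. {j, Suc j} \<in> D})"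
    by (simp add: L_def)
  also have "\<dots> = (\<Sum>D\<in>chord_diagrams m. card {j \<in> ?J. card (short_chords (insert_chord j (Suc j) D)) = s})"
    by (rule sum_card_insert_chord) auto
  also have "\<dots> = (\<Sum>D\<in>chord_diagrams m. (if card (short_chords D) = s then s else 0)
                                          + (if card (short_chords D) = s - 1 then 2 * Suc m - s else 0))"
  proof (rule sum.cong[OF refl])
    fix D assume "D \<in> chord_diagrams m"
    then show "card {j \<in> ?J. card (short_chords (insert_chord j (Suc j) D)) = s}
        = (if card (short_chords D) = s then s else 0)
          + (if card (short_chords D) = s - 1 then 2 * Suc m - s else 0)"
      using card_short_chord_insertions[of D m s] assms by auto
  qed
  also have "\<dots> = s * L m s + (2 * Suc m - s) * L m (s - 1)"
    by (simp add: sum.distrib sum_if_eq_mult_card finite_chord_diagrams L_def)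
  finally show ?thesis .
qed

section \<open>Unimodality\<close>

lemma L_0: "0 < s \<Longrightarrow> L 0 s = 0"
proof -
  assume "0 < s"
  then have "{P \<in> chord_diagrams 0. card (short_chords P) = s} = {}"
    by (auto dest: chord_diagrams_0 simp: short_chords_def)
  then show ?thesis
    by (simp only: L_def card.empty)
qed

lemma L_eq_0_if_less: "n < s \<Longrightarrow> L n s = 0"
proof (induction n arbitrary: s)
  case 0
  then show ?case
    by (simp add: L_0)
next
  case (Suc m)
  then have "s * L (Suc m) s = s * L m s + (2 * Suc m - s) * L m (s - 1)"
    by (intro L_Suc) simp
  also have "\<dots> = 0"
    using Suc by simp
  finally show ?case
    using Suc.prems by simp
qed

lemma L_Suc_1: "L (Suc m) 1 = L (Suc m) 0 + L m 0"
  using L_Suc[of 1 m] L_Suc_0[of m] by simp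

lemma L_0_le_L_Suc_0: "1 \<le> m \<Longrightarrow> L m 0 \<le> L (Suc m) 0"
  using L_Suc_0[of m] by (simp add: trans_le_add1)

lemma L_2_le_L_1_step:
  assumes m: "2 \<le> m" and IH: "L m 2 \<le> L m 1"
  shows "L (Suc m) 2 \<le> L (Suc m) 1"
proof -
  obtain k where k: "m = Suc k" "1 \<le> k"
    using m by (metis Suc_le_D Suc_le_mono one_add_one plus_1_eq_Suc)
  have "L m 1 \<le> 2 * L m 0"
    using L_Suc_1[of k] L_0_le_L_Suc_0[OF k(2)] k(1) by simp
  then have "2*m * L m 1 \<le> 2*m * (2 * L m 0)"
    by (rule mult_le_mono2)
  also have "\<dots> \<le> 2 * ((2*m + 1) * L m 0)"
    by simp
  finally have "2*m * L m 1 \<le> 2 * ((2*m + 1) * L m 0)" .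
  moreover have "2 * L (Suc m) 2 = 2 * L m 2 + 2*m * L m 1"
    using L_Suc[of 2 m] by simp
  moreover have "L (Suc m) 1 = L m 1 + (2*m + 1) * L m 0"
    using L_Suc[of 1 m] by simp
  ultimately show ?thesis
    using IH by linarith
qed

lemma L_Suc_le_step:
  assumes s: "2 \<le> s" and IH1: "L m (Suc s) \<le> L m s" and IH2: "L m s \<le> L m (s - 1)"
  shows "L (Suc m) (Suc s) \<le> L (Suc m) s"
proof -
  have "s * (Suc s * L (Suc m) (Suc s)) = s * (Suc s * L m (Suc s)) + s * ((2 * Suc m - Suc s) * L m s)"
    using L_Suc[of "Suc s" m] by (simp add: algebra_simps)
  also have "\<dots> \<le> s * (Suc s * L m s) + Suc s * ((2 * Suc m - s) * L m (s - 1))"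
  proof (rule add_mono)
    show "s * (Suc s * L m (Suc s)) \<le> s * (Suc s * L m s)"
      by (intro mult_le_mono2 IH1)
    have "(2 * Suc m - Suc s) * L m s \<le> (2 * Suc m - s) * L m (s - 1)"
      by (rule mult_le_mono[OF _ IH2]) simp
    then show "s * ((2 * Suc m - Suc s) * L m s) \<le> Suc s * ((2 * Suc m - s) * L m (s - 1))"
      by (rule mult_le_mono[OF le_SucI[OF order_refl]])
  qed
  also have "\<dots> = Suc s * (s * L (Suc m) s)"
    using L_Suc[of s m] s by (simp add: algebra_simps)
  finally have "(s * Suc s) * L (Suc m) (Suc s) \<le> (s * Suc s) * L (Suc m) s"
    by (simp add: algebra_simps)
  then show ?thesis
    using s by simp
qed

lemma L_Suc_le: "2 \<le> n \<Longrightarrow> 1 \<le> s \<Longrightarrow> L n (Suc s) \<le> L n s"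
proof (induction n arbitrary: s rule: nat_induct_at_least)
  case base
  show ?case
  proof (cases "s = 1")
    case True
    have "2 * L 2 2 = 2 * L 1 1"
      using L_Suc[of 2 1] L_eq_0_if_less[of 1 2] by (simp add: numeral_2_eq_2)
    moreover have "L 1 1 \<le> L 2 1"
      using L_Suc[of 1 1] by (simp add: numeral_2_eq_2)
    ultimately show ?thesis
      using True by (simp add: numeral_2_eq_2)
  next
    case False
    then show ?thesis
      using base L_eq_0_if_less[of 2 "Suc s"] by simp
  qed
next
  case (Suc m)
  show ?case
  proof (cases "s = 1")
    case True
    then show ?thesis
      using L_2_le_L_1_step[OF Suc.hyps] Suc.IH[of 1] by (simp add: numeral_2_eq_2)
  next
    case False
    then have s: "2 \<le> s"
      using Suc.prems by simp
    then have "L m s \<le> L m (s - 1)"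
      using Suc.IH[of "s - 1"] by simp
    then show ?thesis
      using L_Suc_le_step[OF s] Suc.IH[of s] Suc.prems by simp
  qed
qed

theorem theorem1:
  fixes n :: nat
  assumes "n \<ge> 1"
  shows "\<exists>m\<le>n. (\<forall>s. s < m \<longrightarrow> L n s \<le> L n (Suc s))
                 \<and> (\<forall>s. m \<le> s \<and> s < n \<longrightarrow> L n (Suc s) \<le> L n s)"
proof (intro exI[of _ 1] conjI allI impI)
  show "1 \<le> n"
    using assms .
  fix s :: nat
  assume "s < 1"
  moreover obtain k where "n = Suc k"
    using assms by (cases n) auto
  ultimately show "L n s \<le> L n (Suc s)"
    using L_Suc_1[of k] by simp
next
  fix s :: nat
  assume "1 \<le> s \<and> s < n"
  then show "L n (Suc s) \<le> L n s"
    using L_Suc_le by simp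
qed

end
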